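(* Let $p$ be a prime and $m$ a positive integer with $m+1\le p$. Let $B$ be a finite left brace with $(B,+)\cong(\mathbb{Z}/(p))^m$. Then for every nonzero $x\in B$ one has $o_{\cdot}(x)=o_{+}(x)=p$ (equivalently, the group $(B,\cdot)$ has exponent $p$).
   Context: A left brace is a set $B$ with two binary operations $+$ and $\cdot$ such that $(B,+)$ is an abelian group, $(B,\cdot)$ is a group, and $a\cdot(b+c)+a=a\cdot b+a\cdot c$ for all $a,b,c\in B$; the additive identity $0$ is also the multiplicative identity. $o_{\cdot}(x)$ and $o_{+}(x)$ denote the orders of $x$ in $(B,\cdot)$ and $(B,+)$ respectively. *)

theory Defs
  imports "HOL-Algebra.Algebra"
begin

definition left_brace :: "('a, 'b) monoid_scheme \<Rightarrow> ('a, 'c) monoid_scheme \<Rightarrow> bool" where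
  "left_brace A M \<longleftrightarrow>
     comm_group A \<and> group M \<and> carrier M = carrier A \<and> \<one>\<^bsub>M\<^esub> = \<one>\<^bsub>A\<^esub> \<and>
     (\<forall>a\<in>carrier A. \<forall>b\<in>carrier A. \<forall>c\<in>carrier A.
        (a \<otimes>\<^bsub>M\<^esub> (b \<otimes>\<^bsub>A\<^esub> c)) \<otimes>\<^bsub>A\<^esub> a = (a \<otimes>\<^bsub>M\<^esub> b) \<otimes>\<^bsub>A\<^esub> (a \<otimes>\<^bsub>M\<^esub> c))"

end

theory Submission
  imports Defs
begin

text \<open>Write (B,+) additively and let \<open>\<lambda>\<^sub>a(b) = -a + ab\<close>. Each \<open>\<lambda>\<^sub>a\<close> is an additive
  automorphism, \<open>a \<mapsto> \<lambda>\<^sub>a\<close> is multiplicative, and \<open>a^n = \<Sum>k<n. \<lambda>\<^sub>a^k(a)\<close>.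
  Put \<open>N = \<lambda>\<^sub>a - id\<close>. Since (B,+) has exponent p, the binomial theorem gives
  \<open>\<lambda>\<^sub>a^(p^k) = id + N^(p^k)\<close>, so \<open>a^(p^m) = 1\<close> makes N nilpotent. The kernels of the powers
  of N grow strictly until they exhaust the group of order \<open>p^m\<close>, hence \<open>N^m = 0\<close>.
  Finally \<open>a^p = \<Sum>j<p. C(p, j+1) N^j(a) = 0\<close>: for \<open>j < m \<le> p - 1\<close> the coefficient is
  divisible by p, and for \<open>j \<ge> m\<close> the term vanishes.\<close>

lemma (in group) ord_eq_prime:
  assumes "Factorial_Ring.prime p" "x \<in> carrier G" "x \<noteq> \<one>" "x [^] p = \<one>"
  shows "ord x = p"
proof -
  have "ord x dvd p" using assms pow_eq_id by blast
  moreover have "ord x \<noteq> 1" using assms ord_eq_1 by blast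
  ultimately show ?thesis using \<open>Factorial_Ring.prime p\<close> by (auto simp: prime_nat_iff)
qed

lemma (in group) pow_eq_one_if_dvd:
  assumes "x \<in> carrier G" "x [^] p = \<one>" "p dvd n"
  shows "x [^] (n::nat) = \<one>"
  using assms pow_eq_id dvd_trans by blast

lemma pow_product_group:
  "x [^]\<^bsub>product_group I G\<^esub> (n::nat) = (\<lambda>i\<in>I. x i [^]\<^bsub>G i\<^esub> n)"
  by (induction n) auto

lemma pow_product_integer_mod_group_eq_one:
  "x [^]\<^bsub>product_group I (\<lambda>_. integer_mod_group p)\<^esub> p = \<one>\<^bsub>product_group I (\<lambda>_. integer_mod_group p)\<^esub>"
  by (simp add: pow_product_group)

lemma iso_pow_eq_one:
  assumes "G \<cong> H" "group G" "group H"
    and "\<And>y. y \<in> carrier H \<Longrightarrow> y [^]\<^bsub>H\<^esub> (n::nat) = \<one>\<^bsub>H\<^esub>" and "x \<in> carrier G"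
  shows "x [^]\<^bsub>G\<^esub> n = \<one>\<^bsub>G\<^esub>"
proof -
  obtain h where h: "h \<in> iso G H" using assms(1) unfolding is_iso_def by blast
  then interpret group_hom G H h
    using assms(2,3) by (simp add: group_hom_def group_hom_axioms_def iso_iff)
  have "h (x [^]\<^bsub>G\<^esub> n) = h \<one>\<^bsub>G\<^esub>"
    using assms(4,5) by (simp add: hom_nat_pow)
  then show ?thesis
    using h assms(5) by (simp add: iso_iff inj_on_def)
qed

lemma funpow_hom: "N \<in> hom G G \<Longrightarrow> N ^^ k \<in> hom G G"
  by (induction k) (auto simp: hom_def Pi_def)

context group
begin

lemma group_hom_endomorphism: "N \<in> hom G G \<Longrightarrow> group_hom G G N"
  by (simp add: group_hom_def group_hom_axioms_def is_group)

lemma funpow_hom_one: "N \<in> hom G G \<Longrightarrow> (N ^^ k) \<one> = \<one>"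
  by (simp add: funpow_hom group_hom.hom_one group_hom_endomorphism)

lemma kernel_funpow_mono:
  assumes "N \<in> hom G G" "j \<le> k"
  shows "kernel G G (N ^^ j) \<subseteq> kernel G G (N ^^ k)"
proof
  fix x assume "x \<in> kernel G G (N ^^ j)"
  moreover have "N ^^ k = N ^^ (k - j) \<circ> N ^^ j"
    using assms(2) by (simp add: funpow_add[symmetric])
  ultimately show "x \<in> kernel G G (N ^^ k)"
    using funpow_hom_one[OF assms(1)] by (simp add: kernel_def)
qed

lemma kernel_funpow_stable:
  assumes N: "N \<in> hom G G" and stable: "kernel G G (N ^^ Suc j) = kernel G G (N ^^ j)"
  shows "kernel G G (N ^^ (i + j)) = kernel G G (N ^^ j)"
proof (induction i)
  case (Suc i)
  have "kernel G G (N ^^ (Suc i + j)) \<subseteq> kernel G G (N ^^ j)"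
  proof
    fix x assume x: "x \<in> kernel G G (N ^^ (Suc i + j))"
    then have "N x \<in> kernel G G (N ^^ (i + j))"
      using hom_in_carrier[OF N] by (simp add: kernel_def funpow_Suc_right del: funpow.simps)
    then have "N x \<in> kernel G G (N ^^ j)" using Suc.IH by simp
    then have "x \<in> kernel G G (N ^^ Suc j)"
      using x by (simp add: kernel_def funpow_Suc_right del: funpow.simps)
    then show "x \<in> kernel G G (N ^^ j)" using stable by simp
  qed
  moreover have "kernel G G (N ^^ j) \<subseteq> kernel G G (N ^^ (Suc i + j))"
    by (rule kernel_funpow_mono[OF N]) simp
  ultimately show ?case by (rule subset_antisym)
qed simp

lemma card_subgroup_prime_power:
  assumes "Factorial_Ring.prime p" "order G = p ^ m" "subgroup H G"
  shows "\<exists>e. card H = p ^ e"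
  using lagrange[OF assms(3)] assms(1,2) divides_primepow_nat by (metis dvd_triv_right)

lemma kernel_funpow_psubset:
  assumes N: "N \<in> hom G G" and nil: "\<And>x. x \<in> carrier G \<Longrightarrow> (N ^^ q) x = \<one>"
    and proper: "kernel G G (N ^^ j) \<noteq> carrier G"
  shows "kernel G G (N ^^ j) \<subset> kernel G G (N ^^ Suc j)"
proof -
  have "kernel G G (N ^^ Suc j) \<noteq> kernel G G (N ^^ j)"
  proof
    assume "kernel G G (N ^^ Suc j) = kernel G G (N ^^ j)"
    then have "kernel G G (N ^^ (q + j)) = kernel G G (N ^^ j)"
      by (rule kernel_funpow_stable[OF N])
    moreover have "kernel G G (N ^^ q) \<subseteq> kernel G G (N ^^ (q + j))"
      by (rule kernel_funpow_mono[OF N]) simp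
    moreover have "kernel G G (N ^^ q) = carrier G"
      using nil by (auto simp: kernel_def)
    ultimately show False
      using proper by (auto simp: kernel_def)
  qed
  then show ?thesis
    using kernel_funpow_mono[OF N, of j "Suc j"] by auto
qed

lemma card_kernel_funpow_ge:
  assumes p: "Factorial_Ring.prime p" and ord: "order G = p ^ m" and N: "N \<in> hom G G"
    and nil: "\<And>x. x \<in> carrier G \<Longrightarrow> (N ^^ q) x = \<one>"
  shows "kernel G G (N ^^ j) = carrier G \<or> p ^ j \<le> card (kernel G G (N ^^ j))"
proof (induction j)
  case 0
  have "kernel G G (N ^^ 0) = {\<one>}" by (auto simp: kernel_def)
  then show ?case by (simp add: id_def)
next
  case (Suc j)
  define K where "K i = kernel G G (N ^^ i)" for i
  have K_sub: "subgroup (K i) G" for i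
    unfolding K_def by (simp add: N funpow_hom group_hom.subgroup_kernel group_hom_endomorphism)
  show ?case
  proof (cases "K j = carrier G")
    case True
    moreover have "K j \<subseteq> K (Suc j)"
      unfolding K_def by (rule kernel_funpow_mono[OF N]) simp
    ultimately have "K (Suc j) = carrier G"
      using subgroup.subset[OF K_sub[of "Suc j"]] by blast
    then show ?thesis unfolding K_def by blast
  next
    case False
    then have "p ^ j \<le> card (K j)" using Suc.IH unfolding K_def by blast
    have "finite (carrier G)"
      using ord p order_gt_0_iff_finite prime_gt_0_nat by fastforce
    then have "finite (K (Suc j))"
      using subgroup.subset[OF K_sub] by (rule finite_subset[rotated])
    moreover have "K j \<subset> K (Suc j)"
      using kernel_funpow_psubset[OF N nil] False unfolding K_def by blast
    ultimately have "card (K j) < card (K (Suc j))"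
      by (rule psubset_card_mono)
    moreover obtain a b where "card (K j) = p ^ a" "card (K (Suc j)) = p ^ b"
      using card_subgroup_prime_power[OF p ord K_sub] by metis
    ultimately have "j < b"
      using \<open>p ^ j \<le> card (K j)\<close> prime_gt_1_nat[OF p]
      by (metis power_strict_increasing_iff le_less_trans)
    then have "p ^ Suc j \<le> card (K (Suc j))"
      using \<open>card (K (Suc j)) = p ^ b\<close> prime_gt_1_nat[OF p]
      by (metis Suc_leI less_imp_le power_increasing)
    then show ?thesis unfolding K_def by blast
  qed
qed

lemma nilpotent_endomorphism_funpow_order_exponent:
  assumes p: "Factorial_Ring.prime p" and ord: "order G = p ^ m" and N: "N \<in> hom G G"
    and nil: "\<And>x. x \<in> carrier G \<Longrightarrow> (N ^^ q) x = \<one>" and x: "x \<in> carrier G"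
  shows "(N ^^ m) x = \<one>"
proof -
  have "kernel G G (N ^^ m) = carrier G"
  proof (rule ccontr)
    assume proper: "kernel G G (N ^^ m) \<noteq> carrier G"
    then have "p ^ m \<le> card (kernel G G (N ^^ m))"
      using card_kernel_funpow_ge[OF p ord N nil] by blast
    moreover have "card (kernel G G (N ^^ m)) < order G"
      using proper ord p order_gt_0_iff_finite prime_gt_0_nat unfolding order_def
      by (intro psubset_card_mono) (auto simp: kernel_def)
    ultimately show False using ord by simp
  qed
  then show ?thesis using x by (auto simp: kernel_def)
qed

end

context comm_group
begin

lemma hom_mult_inv_id:
  assumes "L \<in> hom G G"
  shows "(\<lambda>y. L y \<otimes> inv y) \<in> hom G G"
  using hom_in_carrier[OF assms] hom_mult[OF assms]
  by (auto simp: hom_def inv_mult m_ac)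

lemma hom_finprod:
  assumes N: "N \<in> hom G G" and f: "f \<in> I \<rightarrow> carrier G"
  shows "N (\<Otimes>i\<in>I. f i) = (\<Otimes>i\<in>I. N (f i))"
proof (cases "finite I")
  case True
  then show ?thesis using f
  proof (induction I rule: finite_induct)
    case (insert i I)
    then show ?case
      using hom_in_carrier[OF N] hom_mult[OF N] by (simp add: Pi_def)
  qed (simp add: group_hom.hom_one group_hom_endomorphism N)
qed (simp add: group_hom.hom_one group_hom_endomorphism N)

lemma funpow_unipotent_binomial:
  assumes N: "N \<in> hom G G" and L: "\<And>y. y \<in> carrier G \<Longrightarrow> L y = y \<otimes> N y"
    and x: "x \<in> carrier G"
  shows "(L ^^ k) x = (\<Otimes>j\<in>{..k}. (N ^^ j) x [^] (k choose j))"
proof (induction k)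
  case 0
  show ?case using x by simp
next
  case (Suc k)
  define F where "F j = (N ^^ j) x" for j
  have F: "F j \<in> carrier G" for j
    unfolding F_def using hom_in_carrier[OF funpow_hom[OF N] x] .
  define P where "P = (L ^^ k) x"
  have P_eq: "P = (\<Otimes>j\<in>{..k}. F j [^] (k choose j))"
    unfolding P_def F_def by (rule Suc.IH)
  have P: "P \<in> carrier G" using P_eq F by simp
  have "N P = (\<Otimes>j\<in>{..k}. N (F j [^] (k choose j)))"
    unfolding P_eq using F by (intro hom_finprod[OF N]) auto
  also have "\<dots> = (\<Otimes>j\<in>{..k}. F (Suc j) [^] (k choose j))"
    using F by (intro finprod_cong) (auto simp: hom_nat_pow[OF N] is_group F_def
        intro!: hom_in_carrier[OF N])
  finally have NP: "N P = (\<Otimes>j\<in>{..k}. F (Suc j) [^] (k choose j))" .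
  have "P = (\<Otimes>j\<in>{..Suc k}. F j [^] (k choose j))"
    unfolding P_eq using F by (simp add: binomial_eq_0)
  also have "\<dots> = (\<Otimes>j\<in>{..k}. F (Suc j) [^] (k choose Suc j)) \<otimes> x"
    using F x by (subst finprod_Suc2) (auto simp: F_def)
  finally have P_shift: "P = (\<Otimes>j\<in>{..k}. F (Suc j) [^] (k choose Suc j)) \<otimes> x" .
  have "(\<Otimes>j\<in>{..Suc k}. F j [^] (Suc k choose j))
      = (\<Otimes>j\<in>{..k}. F (Suc j) [^] (Suc k choose Suc j)) \<otimes> x"
    using F x by (subst finprod_Suc2) (auto simp: F_def)
  also have "(\<Otimes>j\<in>{..k}. F (Suc j) [^] (Suc k choose Suc j))
      = (\<Otimes>j\<in>{..k}. F (Suc j) [^] (k choose j) \<otimes> F (Suc j) [^] (k choose Suc j))"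
    \<comment> \<open>Pascal's rule\<close>
    using F by (intro finprod_cong) (auto simp: nat_pow_mult)
  also have "\<dots> \<otimes> x = N P \<otimes> P"
    unfolding NP using F x by (subst P_shift) (simp add: m_assoc)
  also have "\<dots> = (L ^^ Suc k) x"
    using L[OF P] P hom_in_carrier[OF N P] by (simp add: P_def m_comm)
  finally show ?case unfolding F_def ..
qed

lemma finprod_funpow_unipotent:
  assumes N: "N \<in> hom G G" and L: "\<And>y. y \<in> carrier G \<Longrightarrow> L y = y \<otimes> N y"
    and x: "x \<in> carrier G"
  shows "(\<Otimes>k\<in>{..<n}. (L ^^ k) x) = (\<Otimes>j\<in>{..<n}. (N ^^ j) x [^] (n choose Suc j))"
proof (induction n)
  case (Suc n)
  define F where "F j = (N ^^ j) x" for j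
  have F: "F j \<in> carrier G" for j
    unfolding F_def using hom_in_carrier[OF funpow_hom[OF N] x] .
  have L_closed: "(L ^^ k) x \<in> carrier G" for k
    using funpow_unipotent_binomial[OF N L x] F by (simp add: F_def)
  have "(\<Otimes>j\<in>{..<Suc n}. F j [^] (Suc n choose Suc j))
      = (\<Otimes>j\<in>{..n}. F j [^] (n choose j) \<otimes> F j [^] (n choose Suc j))"
    unfolding lessThan_Suc_atMost using F by (intro finprod_cong) (auto simp: nat_pow_mult)
  also have "\<dots> = (\<Otimes>j\<in>{..n}. F j [^] (n choose j)) \<otimes> (\<Otimes>j\<in>{..<n}. F j [^] (n choose Suc j))"
    using F by (simp add: finprod_Suc3 binomial_eq_0)
  also have "\<dots> = (L ^^ n) x \<otimes> (\<Otimes>k\<in>{..<n}. (L ^^ k) x)"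
    using Suc.IH funpow_unipotent_binomial[OF N L x] by (simp add: F_def)
  also have "\<dots> = (\<Otimes>k\<in>{..<Suc n}. (L ^^ k) x)"
    using L_closed by (simp add: lessThan_Suc)
  finally show ?case by (simp add: F_def)
qed simp

lemma funpow_unipotent_prime:
  assumes p: "Factorial_Ring.prime p" and exponent: "\<And>y. y \<in> carrier G \<Longrightarrow> y [^] p = \<one>"
    and N: "N \<in> hom G G" and L: "\<And>y. y \<in> carrier G \<Longrightarrow> L y = y \<otimes> N y"
    and x: "x \<in> carrier G"
  shows "(L ^^ p) x = x \<otimes> (N ^^ p) x"
proof -
  define F where "F j = (N ^^ j) x" for j
  have F: "F j \<in> carrier G" for j
    unfolding F_def using hom_in_carrier[OF funpow_hom[OF N] x] .
  have binomial_middle: "(\<Otimes>j\<in>{1..<p}. F j [^] (p choose j)) = \<one>"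
  proof (rule finprod_one_eqI)
    fix j assume "j \<in> {1..<p}"
    then have "p dvd (p choose j)" using p by (intro dvd_choose_prime) auto
    then show "F j [^] (p choose j) = \<one>" using F exponent pow_eq_one_if_dvd by blast
  qed
  have "{..p} = insert p (insert 0 {1..<p})"
    using prime_gt_0_nat[OF p] by auto
  then have "(L ^^ p) x = F p \<otimes> (F 0 \<otimes> (\<Otimes>j\<in>{1..<p}. F j [^] (p choose j)))"
    using funpow_unipotent_binomial[OF N L x, of p] F prime_gt_0_nat[OF p]
    by (simp add: F_def[symmetric])
  then show ?thesis
    using binomial_middle F x by (simp add: F_def m_comm)
qed

lemma funpow_unipotent_prime_power:
  assumes p: "Factorial_Ring.prime p" and exponent: "\<And>y. y \<in> carrier G \<Longrightarrow> y [^] p = \<one>"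
    and N: "N \<in> hom G G" and L: "\<And>y. y \<in> carrier G \<Longrightarrow> L y = y \<otimes> N y"
    and x: "x \<in> carrier G"
  shows "(L ^^ (p ^ k)) x = x \<otimes> (N ^^ (p ^ k)) x"
  using x
proof (induction k arbitrary: x)
  case (Suc k)
  have "(L ^^ (p ^ Suc k)) x = ((L ^^ (p ^ k)) ^^ p) x"
    by (simp add: funpow_mult mult.commute)
  also have "\<dots> = x \<otimes> ((N ^^ (p ^ k)) ^^ p) x"
    using Suc by (intro funpow_unipotent_prime[OF p exponent funpow_hom[OF N]])
  also have "(N ^^ (p ^ k)) ^^ p = N ^^ (p ^ Suc k)"
    by (simp add: funpow_mult mult.commute)
  finally show ?case .
qed (simp add: L)

end

locale brace =
  fixes A :: "('a, 'b) monoid_scheme" (structure) and M :: "('a, 'c) monoid_scheme"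
  assumes left_brace: "left_brace A M"
begin

sublocale A: comm_group A
  using left_brace by (simp add: left_brace_def)

sublocale M: group M
  using left_brace by (simp add: left_brace_def)

lemma carrier_M [simp]: "carrier M = carrier A"
  using left_brace by (simp add: left_brace_def)

lemma one_M [simp]: "\<one>\<^bsub>M\<^esub> = \<one>"
  using left_brace by (simp add: left_brace_def)

lemma mult_M_closed [simp]: "a \<in> carrier A \<Longrightarrow> b \<in> carrier A \<Longrightarrow> a \<otimes>\<^bsub>M\<^esub> b \<in> carrier A"
  using M.m_closed by simp

lemma brace_distrib:
  assumes "a \<in> carrier A" "b \<in> carrier A" "c \<in> carrier A"
  shows "a \<otimes>\<^bsub>M\<^esub> (b \<otimes> c) = (a \<otimes>\<^bsub>M\<^esub> b) \<otimes> (a \<otimes>\<^bsub>M\<^esub> c) \<otimes> inv a"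
  using left_brace assms by (simp add: left_brace_def A.inv_solve_right)

text \<open>The map \<open>\<lambda>\<^sub>a(b) = -a + ab\<close>, with (B,+) written multiplicatively as in HOL-Algebra.\<close>

definition lambda_map :: "'a \<Rightarrow> 'a \<Rightarrow> 'a" where
  "lambda_map a b = inv a \<otimes> (a \<otimes>\<^bsub>M\<^esub> b)"

lemma mult_M_eq_lambda_map:
  "a \<in> carrier A \<Longrightarrow> b \<in> carrier A \<Longrightarrow> a \<otimes>\<^bsub>M\<^esub> b = a \<otimes> lambda_map a b"
  by (simp add: lambda_map_def A.m_assoc[symmetric])

lemma lambda_map_hom:
  assumes a: "a \<in> carrier A"
  shows "lambda_map a \<in> hom A A"
proof (rule homI)
  fix b c assume "b \<in> carrier A" "c \<in> carrier A"
  then show "lambda_map a (b \<otimes> c) = lambda_map a b \<otimes> lambda_map a c"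
    using a by (simp add: lambda_map_def brace_distrib A.m_ac)
qed (simp add: lambda_map_def a)

lemma lambda_map_one: "b \<in> carrier A \<Longrightarrow> lambda_map \<one> b = b"
  using M.l_one by (simp add: lambda_map_def)

lemma lambda_map_mult:
  assumes a: "a \<in> carrier A" and b: "b \<in> carrier A" and c: "c \<in> carrier A"
  shows "lambda_map (a \<otimes>\<^bsub>M\<^esub> b) c = lambda_map a (lambda_map b c)"
proof -
  interpret group_hom A A "lambda_map a"
    using lambda_map_hom[OF a] A.group_hom_endomorphism by simp
  have "lambda_map a (lambda_map b c) = inv (lambda_map a b) \<otimes> lambda_map a (b \<otimes>\<^bsub>M\<^esub> c)"
    using b c by (simp add: lambda_map_def[of b])
  also have "\<dots> = inv (a \<otimes>\<^bsub>M\<^esub> b) \<otimes> ((a \<otimes>\<^bsub>M\<^esub> b) \<otimes>\<^bsub>M\<^esub> c)"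
    using a b c by (simp add: lambda_map_def M.m_assoc A.inv_mult A.m_ac)
      (simp add: A.m_assoc[symmetric])
  finally show ?thesis by (simp add: lambda_map_def)
qed

lemma lambda_map_pow:
  assumes a: "a \<in> carrier A" and b: "b \<in> carrier A"
  shows "lambda_map (a [^]\<^bsub>M\<^esub> n) b = (lambda_map a ^^ n) b"
  using b
proof (induction n arbitrary: b)
  case (Suc n)
  have "lambda_map a b \<in> carrier A"
    using hom_in_carrier[OF lambda_map_hom[OF a] Suc.prems] .
  then show ?case
    using Suc a M.nat_pow_closed[of a n]
    by (simp add: lambda_map_mult funpow_Suc_right del: funpow.simps)
qed (simp add: lambda_map_one)

lemma pow_M_eq_finprod:
  assumes a: "a \<in> carrier A"
  shows "a [^]\<^bsub>M\<^esub> n = (\<Otimes>k\<in>{..<n}. (lambda_map a ^^ k) a)"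
proof (induction n)
  case (Suc n)
  have closed: "(lambda_map a ^^ k) a \<in> carrier A" for k
    using hom_in_carrier[OF funpow_hom[OF lambda_map_hom[OF a]] a] .
  have "a [^]\<^bsub>M\<^esub> Suc n = a [^]\<^bsub>M\<^esub> n \<otimes> (lambda_map a ^^ n) a"
    using a M.nat_pow_closed[of a n] by (simp add: mult_M_eq_lambda_map lambda_map_pow)
  also have "\<dots> = (\<Otimes>k\<in>{..<Suc n}. (lambda_map a ^^ k) a)"
    using Suc closed by (simp add: lessThan_Suc A.m_comm Pi_def)
  finally show ?case .
qed simp

lemma pow_M_prime_eq_one:
  assumes p: "Factorial_Ring.prime p" and ord: "order A = p ^ m" and "m < p"
    and exponent: "\<And>y. y \<in> carrier A \<Longrightarrow> y [^] p = \<one>" and a: "a \<in> carrier A"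
  shows "a [^]\<^bsub>M\<^esub> p = \<one>"
proof -
  define N where "N y = lambda_map a y \<otimes> inv y" for y
  have N: "N \<in> hom A A"
    unfolding N_def by (rule A.hom_mult_inv_id[OF lambda_map_hom[OF a]])
  have L: "lambda_map a y = y \<otimes> N y" if "y \<in> carrier A" for y
    using that hom_in_carrier[OF lambda_map_hom[OF a] that]
    by (simp add: N_def A.m_lcomm[of y "lambda_map a y"])
  have "(N ^^ (p ^ m)) y = \<one>" if y: "y \<in> carrier A" for y
  proof -
    have "a [^]\<^bsub>M\<^esub> (p ^ m) = \<one>"
      using M.pow_order_eq_1 a ord by (simp add: order_def)
    then have "y = lambda_map (a [^]\<^bsub>M\<^esub> (p ^ m)) y"
      using lambda_map_one[OF y] by simp
    also have "\<dots> = (lambda_map a ^^ (p ^ m)) y"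
      by (rule lambda_map_pow[OF a y])
    also have "\<dots> = y \<otimes> (N ^^ (p ^ m)) y"
      by (rule A.funpow_unipotent_prime_power[OF p exponent N L y])
    finally show ?thesis
      using y hom_in_carrier[OF funpow_hom[OF N] y] by simp
  qed
  then have vanish: "(N ^^ j) a = \<one>" if "m \<le> j" for j
    using A.nilpotent_endomorphism_funpow_order_exponent[OF p ord N] a that
      A.funpow_hom_one[OF N, of "j - m"]
    by (metis funpow_add le_add_diff_inverse2 comp_apply)
  have "a [^]\<^bsub>M\<^esub> p = (\<Otimes>j\<in>{..<p}. (N ^^ j) a [^] (p choose Suc j))"
    using pow_M_eq_finprod[OF a] A.finprod_funpow_unipotent[OF N L a] by simp
  also have "\<dots> = \<one>"
  proof (rule A.finprod_one_eqI)
    fix j assume "j \<in> {..<p}"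
    show "(N ^^ j) a [^] (p choose Suc j) = \<one>"
    proof (cases "j < m")
      case True
      then have "p dvd (p choose Suc j)"
        using p \<open>m < p\<close> by (intro dvd_choose_prime) auto
      then show ?thesis
        using exponent a hom_in_carrier[OF funpow_hom[OF N] a] A.pow_eq_one_if_dvd by blast
    qed (simp add: vanish)
  qed
  finally show ?thesis .
qed

end

theorem lemma2p6:
  fixes A :: "('a, 'b) monoid_scheme" and M :: "('a, 'c) monoid_scheme"
    and p m :: nat
  assumes "Factorial_Ring.prime p" and "0 < m" and "m + 1 \<le> p"
    and "left_brace A M"
    and "finite (carrier A)"
    and "A \<cong> product_group {..<m} (\<lambda>_. integer_mod_group p)"
  shows "\<forall>x\<in>carrier A. x \<noteq> \<one>\<^bsub>A\<^esub> \<longrightarrow> group.ord M x = p \<and> group.ord A x = p"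
proof -
  note p = assms(1) and iso = assms(6)
  interpret brace A M by (rule brace.intro) (rule assms(4))
  have order: "order A = p ^ m"
    using iso_same_card[OF iso] prime_gt_0_nat[OF p]
    by (simp add: order_def card_PiE carrier_integer_mod_group)
  have exponent: "y [^]\<^bsub>A\<^esub> p = \<one>\<^bsub>A\<^esub>" if "y \<in> carrier A" for y
    by (rule iso_pow_eq_one[OF iso A.is_group])
      (simp_all add: pow_product_integer_mod_group_eq_one that)
  have "x [^]\<^bsub>M\<^esub> p = \<one>\<^bsub>M\<^esub>" if "x \<in> carrier A" for x
    using pow_M_prime_eq_one[OF p order _ exponent that] assms(3) by simp
  then show ?thesis
    using p exponent by (auto intro: M.ord_eq_prime A.ord_eq_prime)
qed

end
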